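(* Let $H$ be an oriented graph on $h$ vertices. Consider any labeling of the vertices of $H$ by $1,\dots,h$ and let $G$ be the corresponding backedge graph. Then for every order-preserving homomorphism $f:G\to K(H)$ there is a set $X\subseteq V(H)$ such that $f|_X$ is a graph isomorphism onto $K(H)$.
   Context: Graphs are undirected with vertex sets that are subsets of $\mathbb{N}$; subgraphs inherit labels. Given a labeling of $V(H)$ by $1,\dots,h$, the backedge graph of $H$ is the undirected graph on $[h]$ with $\{i,j\}$ an edge iff $i<j$ and $j\to i$ in $H$. An order-preserving homomorphism from $G$ to $G'$ is a map $f:V(G)\to V(G')$ with $f(i)\le f(j)$ whenever $i\le j$ and mapping edges to edges; an order-preserving isomorphism is one that is also a graph isomorphism. The ordered core of $G$ is a subgraph of $G$ with the fewest vertices among subgraphs to which $G$ has an order-preserving homomorphism. Let $\mathcal{C}(H)$ be the set of ordered cores of the backedge graphs of $H$ over all $h!$ labelings of $V(H)$ by $1,\dots,h$. $K(H)$ denotes a fixed element of $\mathcal{C}(H)$ that is maximal in the sense that for every $C\in\mathcal{C}(H)$, if there is an order-preserving homomorphism from $C$ to $K(H)$ then there is an order-preserving isomorphism between $C$ and $K(H)$. *)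

theory Defs
  imports Main
begin

record ugraph =
  verts :: "nat set"
  edges :: "nat set set"

definition oriented_graph :: "'a set \<Rightarrow> ('a \<times> 'a) set \<Rightarrow> bool" where
  "oriented_graph V A \<longleftrightarrow> finite V \<and> A \<subseteq> V \<times> V \<and>
     (\<forall>u. (u, u) \<notin> A) \<and> (\<forall>u v. (u, v) \<in> A \<longrightarrow> (v, u) \<notin> A)"

definition labeling :: "'a set \<Rightarrow> ('a \<Rightarrow> nat) \<Rightarrow> bool" where
  "labeling V \<sigma> \<longleftrightarrow> bij_betw \<sigma> V {1..card V}"

definition backedge_graph :: "'a set \<Rightarrow> ('a \<times> 'a) set \<Rightarrow> ('a \<Rightarrow> nat) \<Rightarrow> ugraph" where
  "backedge_graph V A \<sigma> =
     \<lparr> verts = {1..card V},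
       edges = {{i, j} | i j. i \<in> {1..card V} \<and> j \<in> {1..card V} \<and> i < j \<and>
                              (inv_into V \<sigma> j, inv_into V \<sigma> i) \<in> A} \<rparr>"

definition op_hom :: "(nat \<Rightarrow> nat) \<Rightarrow> ugraph \<Rightarrow> ugraph \<Rightarrow> bool" where
  "op_hom f G G' \<longleftrightarrow> f ` verts G \<subseteq> verts G' \<and>
     (\<forall>i\<in>verts G. \<forall>j\<in>verts G. i \<le> j \<longrightarrow> f i \<le> f j) \<and>
     (\<forall>i j. {i, j} \<in> edges G \<longrightarrow> {f i, f j} \<in> edges G')"

definition op_iso :: "(nat \<Rightarrow> nat) \<Rightarrow> ugraph \<Rightarrow> ugraph \<Rightarrow> bool" where
  "op_iso f G G' \<longleftrightarrow> op_hom f G G' \<and> bij_betw f (verts G) (verts G') \<and>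
     (\<forall>i\<in>verts G. \<forall>j\<in>verts G. {f i, f j} \<in> edges G' \<longrightarrow> {i, j} \<in> edges G)"

definition subgraph :: "ugraph \<Rightarrow> ugraph \<Rightarrow> bool" where
  "subgraph S G \<longleftrightarrow> verts S \<subseteq> verts G \<and> edges S \<subseteq> edges G \<and> (\<forall>e\<in>edges S. e \<subseteq> verts S)"

definition ordered_core :: "ugraph \<Rightarrow> ugraph \<Rightarrow> bool" where
  "ordered_core G C \<longleftrightarrow> subgraph C G \<and> (\<exists>f. op_hom f G C) \<and>
     (\<forall>S. subgraph S G \<and> (\<exists>f. op_hom f G S) \<longrightarrow> card (verts C) \<le> card (verts S))"

definition core_set :: "'a set \<Rightarrow> ('a \<times> 'a) set \<Rightarrow> ugraph set" where
  "core_set V A = {C. \<exists>\<sigma>. labeling V \<sigma> \<and> ordered_core (backedge_graph V A \<sigma>) C}"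

definition maximal_core :: "'a set \<Rightarrow> ('a \<times> 'a) set \<Rightarrow> ugraph \<Rightarrow> bool" where
  "maximal_core V A K \<longleftrightarrow> K \<in> core_set V A \<and>
     (\<forall>C\<in>core_set V A. (\<exists>f. op_hom f C K) \<longrightarrow> (\<exists>g. op_iso g C K))"

end

theory Submission
  imports Defs
begin

text \<open>Restrict \<open>f\<close> to an ordered core \<open>C\<close> of the backedge graph \<open>G\<close>. Then \<open>C\<close> lies in
  \<open>\<C>(H)\<close> and maps to \<open>K(H)\<close>, so maximality yields an order-preserving isomorphism
  \<open>g : C \<cong> K(H)\<close>. The map \<open>h = g\<inverse> \<circ> f\<close> is an order-preserving endomorphism of \<open>C\<close>; its
  image spans a subgraph of \<open>G\<close> onto which \<open>G\<close> still maps, so minimality of the core forces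
  \<open>h\<close> to be a bijection, and a bijective endomorphism of a finite graph also reflects edges.
  Hence \<open>f = g \<circ> h\<close> is an isomorphism from \<open>C\<close> onto \<open>K(H)\<close>, and \<open>X = V(C)\<close> works.\<close>

lemma op_hom_comp:
  assumes "op_hom p G S" "op_hom q S T"
  shows "op_hom (q \<circ> p) G T"
  using assms unfolding op_hom_def by (auto simp: image_subset_iff)

lemma op_hom_subgraph:
  assumes "subgraph C G" "op_hom f G K"
  shows "op_hom f C K"
  using assms unfolding subgraph_def op_hom_def by blast

lemma ordered_core_exists:
  assumes "\<forall>e\<in>edges G. e \<subseteq> verts G"
  shows "\<exists>C. ordered_core G C"
proof -
  let ?P = "\<lambda>S. subgraph S G \<and> (\<exists>p. op_hom p G S)"
  have "?P G"
    using assms unfolding subgraph_def op_hom_def by (intro conjI exI[of _ id]) auto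
  then obtain C where "?P C" "\<forall>S. ?P S \<longrightarrow> card (verts C) \<le> card (verts S)"
    using ex_has_least_nat[of ?P G "\<lambda>S. card (verts S)"] by blast
  then show ?thesis unfolding ordered_core_def by blast
qed

lemma bij_endo_reflects_edges:
  fixes h :: "'a \<Rightarrow> 'a" and E :: "'a set set"
  assumes "finite V" and h: "bij_betw h V V" and E: "\<forall>e\<in>E. e \<subseteq> V"
    and hom: "\<forall>i j. {i, j} \<in> E \<longrightarrow> {h i, h j} \<in> E"
    and ij: "i \<in> V" "j \<in> V" "{h i, h j} \<in> E"
  shows "{i, j} \<in> E"
proof -
  \<comment> \<open>\<open>h\<close> permutes the finite set of two-point edges, so its preimages are edges too\<close>
  define P where "P = {e \<in> E. \<exists>a b. e = {a, b}}"
  have inj: "inj_on h V" using h bij_betw_def by blast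
  have P_sub: "e \<subseteq> V" if "e \<in> P" for e using that E P_def by blast
  have "finite P"
    using P_sub \<open>finite V\<close> by (intro finite_subset[of P "Pow V"]) auto
  moreover have "(\<lambda>e. h ` e) ` P \<subseteq> P" using hom unfolding P_def by fastforce
  moreover have "inj_on (\<lambda>e. h ` e) P"
  proof (rule inj_onI)
    fix a b assume "a \<in> P" "b \<in> P" "h ` a = h ` b"
    then show "a = b" using inj_on_image_eq_iff[OF inj] P_sub by blast
  qed
  ultimately have image_P: "(\<lambda>e. h ` e) ` P = P" by (rule endo_inj_surj)
  have "h ` {i, j} \<in> P" using ij unfolding P_def by auto
  then obtain e where e: "e \<in> P" "h ` {i, j} = h ` e" by (metis image_P imageE)
  moreover have "{i, j} \<subseteq> V" using ij by simp
  ultimately have "{i, j} = e" using inj_on_image_eq_iff[OF inj] P_sub by metis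
  then show ?thesis using e(1) P_def by blast
qed

text \<open>The image of the endomorphism spans a subgraph of \<open>G\<close> that \<open>G\<close> maps to through
  \<open>C\<close>, so by minimality of the core it cannot have fewer vertices than \<open>C\<close>.\<close>

lemma ordered_core_endo_bij:
  assumes "finite (verts G)" and core: "ordered_core G C" and h: "op_hom h C C"
  shows "bij_betw h (verts C) (verts C)"
proof -
  have sub: "subgraph C G" and min: "\<And>S p. subgraph S G \<Longrightarrow> op_hom p G S \<Longrightarrow>
      card (verts C) \<le> card (verts S)"
    using core unfolding ordered_core_def by blast+
  obtain \<phi> where \<phi>: "op_hom \<phi> G C" using core unfolding ordered_core_def by blast
  have fin: "finite (verts C)"
    using sub \<open>finite (verts G)\<close> unfolding subgraph_def by (blast intro: finite_subset)
  have hC: "h ` verts C \<subseteq> verts C" using h unfolding op_hom_def by blast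
  define S where "S = \<lparr>verts = h ` verts C, edges = {e \<in> edges C. e \<subseteq> h ` verts C}\<rparr>"
  have "subgraph S G" using sub hC unfolding subgraph_def S_def by auto
  moreover have "op_hom h C S"
    using h sub unfolding op_hom_def subgraph_def S_def by auto
  ultimately have "card (verts C) \<le> card (h ` verts C)"
    using min op_hom_comp[OF \<phi>] unfolding S_def by fastforce
  then have "card (h ` verts C) = card (verts C)" using card_image_le[OF fin, of h] by linarith
  then have "inj_on h (verts C)" by (rule eq_card_imp_inj_on[OF fin])
  then show ?thesis
    using endo_inj_surj[OF fin hC] by (simp add: bij_betw_def)
qed

lemma op_hom_inv_op_iso_comp:
  assumes g: "op_iso g C K" and f: "op_hom f C K" and C: "\<forall>e\<in>edges C. e \<subseteq> verts C"
  shows "op_hom (inv_into (verts C) g \<circ> f) C C"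
proof -
  let ?gi = "inv_into (verts C) g"
  have gbij: "bij_betw g (verts C) (verts K)"
    and gmono: "\<forall>i\<in>verts C. \<forall>j\<in>verts C. i \<le> j \<longrightarrow> g i \<le> g j"
    and gback: "\<forall>i\<in>verts C. \<forall>j\<in>verts C. {g i, g j} \<in> edges K \<longrightarrow> {i, j} \<in> edges C"
    using g unfolding op_iso_def op_hom_def by blast+
  have gi_in: "?gi y \<in> verts C" and g_gi: "g (?gi y) = y" if "y \<in> verts K" for y
    using that gbij by (auto simp: bij_betw_def inv_into_into f_inv_into_f)
  have gi_mono: "?gi a \<le> ?gi b" if "a \<in> verts K" "b \<in> verts K" "a \<le> b" for a b
  proof (rule ccontr)
    assume "\<not> ?gi a \<le> ?gi b"
    then have "b \<le> a" using gmono gi_in g_gi that by (metis nle_le)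
    with \<open>a \<le> b\<close> have "a = b" by simp
    with \<open>\<not> ?gi a \<le> ?gi b\<close> show False by simp
  qed
  have fC: "f i \<in> verts K" if "i \<in> verts C" for i using f that unfolding op_hom_def by blast
  have "{?gi (f i), ?gi (f j)} \<in> edges C" if "{i, j} \<in> edges C" for i j
  proof -
    have ij: "i \<in> verts C" "j \<in> verts C" using that C by auto
    have "{g (?gi (f i)), g (?gi (f j))} \<in> edges K"
      using f that fC ij g_gi unfolding op_hom_def by simp
    then show ?thesis using gback gi_in fC ij by blast
  qed
  then show ?thesis
    using f gi_in gi_mono fC unfolding op_hom_def by (auto simp: image_subset_iff)
qed

lemma op_hom_iso_on_ordered_core:
  assumes "finite (verts G)" and core: "ordered_core G C"
    and g: "op_iso g C K" and f: "op_hom f G K"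
  shows "bij_betw f (verts C) (verts K) \<and>
    (\<forall>i\<in>verts C. \<forall>j\<in>verts C. {i, j} \<in> edges G \<longleftrightarrow> {f i, f j} \<in> edges K)"
proof -
  define h where "h = inv_into (verts C) g \<circ> f"
  have sub: "subgraph C G" using core unfolding ordered_core_def by blast
  then have C: "\<forall>e\<in>edges C. e \<subseteq> verts C" "edges C \<subseteq> edges G"
    unfolding subgraph_def by blast+
  have fC: "op_hom f C K" using op_hom_subgraph[OF sub f] .
  have hC: "op_hom h C C" unfolding h_def using op_hom_inv_op_iso_comp[OF g fC C(1)] .
  have hbij: "bij_betw h (verts C) (verts C)"
    using ordered_core_endo_bij[OF \<open>finite (verts G)\<close> core hC] .
  have gbij: "bij_betw g (verts C) (verts K)"
    and gback: "\<forall>i\<in>verts C. \<forall>j\<in>verts C. {g i, g j} \<in> edges K \<longrightarrow> {i, j} \<in> edges C"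
    using g unfolding op_iso_def by blast+
  have gh: "g (h i) = f i" if "i \<in> verts C" for i
  proof -
    have "f i \<in> g ` verts C"
      using fC that bij_betw_imp_surj_on[OF gbij] unfolding op_hom_def by blast
    then show ?thesis by (simp add: h_def f_inv_into_f)
  qed
  have "bij_betw (g \<circ> h) (verts C) (verts K)" using bij_betw_trans[OF hbij gbij] .
  then have "bij_betw f (verts C) (verts K)"
    using bij_betw_cong[of "verts C" "g \<circ> h" f] gh by simp
  moreover have "{i, j} \<in> edges G"
    if ij: "i \<in> verts C" "j \<in> verts C" and fij: "{f i, f j} \<in> edges K" for i j
  proof -
    have hij: "h i \<in> verts C" "h j \<in> verts C" using hbij ij bij_betwE by blast+
    have "{g (h i), g (h j)} \<in> edges K" using fij gh ij by simp
    then have "{h i, h j} \<in> edges C" using gback hij by blast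
    moreover have "finite (verts C)"
      using sub \<open>finite (verts G)\<close> unfolding subgraph_def by (blast intro: finite_subset)
    moreover have "\<forall>i j. {i, j} \<in> edges C \<longrightarrow> {h i, h j} \<in> edges C"
      using hC unfolding op_hom_def by blast
    ultimately have "{i, j} \<in> edges C"
      using bij_endo_reflects_edges[OF _ hbij C(1)] ij by blast
    then show ?thesis using C(2) by blast
  qed
  moreover have "{f i, f j} \<in> edges K" if "{i, j} \<in> edges G" for i j
    using f that unfolding op_hom_def by blast
  ultimately show ?thesis by blast
qed

theorem proposition4p6:
  fixes V :: "'a set" and A :: "('a \<times> 'a) set" and \<sigma> :: "'a \<Rightarrow> nat"
    and K :: ugraph and f :: "nat \<Rightarrow> nat"
  assumes "oriented_graph V A"
    and "maximal_core V A K"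
    and "labeling V \<sigma>"
    and "op_hom f (backedge_graph V A \<sigma>) K"
  shows "\<exists>X \<subseteq> verts (backedge_graph V A \<sigma>).
           bij_betw f X (verts K) \<and>
           (\<forall>i\<in>X. \<forall>j\<in>X. {i, j} \<in> edges (backedge_graph V A \<sigma>) \<longleftrightarrow> {f i, f j} \<in> edges K)"
proof -
  let ?G = "backedge_graph V A \<sigma>"
  have "\<forall>e\<in>edges ?G. e \<subseteq> verts ?G" by (auto simp: backedge_graph_def)
  then obtain C where core: "ordered_core ?G C" using ordered_core_exists by blast
  then have "C \<in> core_set V A" using assms(3) unfolding core_set_def by blast
  moreover have "op_hom f C K"
    using op_hom_subgraph assms(4) core unfolding ordered_core_def by blast
  ultimately obtain g where "op_iso g C K"
    using assms(2) unfolding maximal_core_def by blast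
  moreover have "finite (verts ?G)" by (simp add: backedge_graph_def)
  moreover have "verts C \<subseteq> verts ?G"
    using core unfolding ordered_core_def subgraph_def by blast
  ultimately show ?thesis
    using op_hom_iso_on_ordered_core[OF _ core _ assms(4)] by blast
qed

end
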